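(* Let $\Omega \subseteq \mathbb{R}^d$ be a bounded open convex set and $K \subseteq \mathbb{R}^d$ a compact set such that the origin belongs to the interior of $K$. Let $\mu_+,\mu_-$ be Borel probability measures on $\Omega$. Then $\mathrm{VDC}_K(\mu_+\|\mu_-) := \sup_{u \in \mathcal{A}} \int_\Omega u\, d(\mu_- - \mu_+) = 0$ if and only if $\int_\Omega u \, d(\mu_- - \mu_+) \leq 0$ for every convex function $u$ on $\Omega$ (i.e. $\mu_- \preceq \mu_+$ in the Choquet order).
   Context: $\mathcal{A} = \{ u : \Omega \to \mathbb{R} \,:\, u \text{ convex and } \nabla u \in K \text{ almost everywhere}\}$. For measures with finite first moment, $\mu \preceq \nu$ (Choquet or convex order) means $\int f\, d\mu \leq \int f\, d\nu$ for every convex function $f$. *)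

theory Defs
  imports "HOL-Probability.Probability"
begin

definition admissible :: "'a::euclidean_space set \<Rightarrow> 'a set \<Rightarrow> ('a \<Rightarrow> real) set" where
  "admissible \<Omega> K = {u. convex_on \<Omega> u \<and>
     (AE x in lebesgue. x \<in> \<Omega> \<longrightarrow> (\<exists>g\<in>K. (u has_derivative (\<lambda>h. g \<bullet> h)) (at x)))}"

definition VDC :: "'a::euclidean_space set \<Rightarrow> 'a set \<Rightarrow> 'a measure \<Rightarrow> 'a measure \<Rightarrow> ereal" where
  "VDC \<Omega> K \<mu>p \<mu>m = (SUP u\<in>admissible \<Omega> K. ereal (integral\<^sup>L \<mu>m u - integral\<^sup>L \<mu>p u))"

end

theory Submission
  imports Defs
begin

(* Admissible functions are convex with gradient in the bounded set K almost everywhere; as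
   the points of differentiability are dense, the tangent-plane inequality makes them
   Lipschitz, hence bounded and integrable. So the Choquet condition makes every term of the
   supremum defining VDC nonpositive, while the zero function shows VDC >= 0.
   Conversely, a convex function on the open set Omega is the increasing pointwise limit of
   maxima of finitely many supporting affine functions, taken at the points of a dense
   sequence. Each such maximum becomes admissible once its slopes are scaled into a ball
   around 0 inside K, and dominated convergence passes the inequality to the limit. *)

lemma convex_on_imp_above_tangent_plane:
  fixes u :: "'a::real_inner \<Rightarrow> real"
  assumes "convex_on S u" "z \<in> S" "y \<in> S"
    and deriv: "(u has_derivative (\<lambda>h. g \<bullet> h)) (at z)"
  shows "u z + g \<bullet> (y - z) \<le> u y"
proof -
  define \<phi> where "\<phi> t = u (z + t *\<^sub>R (y - z))" for t
  have "((\<lambda>t. z + t *\<^sub>R (y - z)) has_derivative (\<lambda>t. t *\<^sub>R (y - z))) (at 0)"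
    by (auto intro!: derivative_eq_intros)
  moreover have "(u has_derivative (\<lambda>h. g \<bullet> h)) (at (z + 0 *\<^sub>R (y - z)))"
    using deriv by simp
  ultimately have "(\<phi> has_derivative (\<lambda>t. g \<bullet> (t *\<^sub>R (y - z)))) (at 0)"
    unfolding \<phi>_def by (rule diff_chain_at[unfolded o_def])
  then have "(\<phi> has_real_derivative g \<bullet> (y - z)) (at 0)"
    by (simp add: has_field_derivative_def mult.commute[of _ "g \<bullet> (y - z)"])
  then have "((\<lambda>t. (\<phi> t - \<phi> 0) / t) \<longlongrightarrow> g \<bullet> (y - z)) (at_right 0)"
    by (auto simp: has_field_derivative_iff intro: tendsto_mono at_le)
  moreover have "\<forall>\<^sub>F t in at_right 0. (\<phi> t - \<phi> 0) / t \<le> u y - u z"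
    using eventually_at_right_real[OF zero_less_one]
  proof eventually_elim
    case (elim t)
    have "\<phi> t = u ((1 - t) *\<^sub>R z + t *\<^sub>R y)"
      by (simp add: \<phi>_def algebra_simps)
    also have "\<dots> \<le> (1 - t) * u z + t * u y"
      using elim assms by (intro convex_onD) auto
    finally show ?case
      using elim by (simp add: \<phi>_def divide_simps algebra_simps)
  qed
  ultimately have "g \<bullet> (y - z) \<le> u y - u z"
    by (rule tendsto_upperbound) simp
  then show ?thesis by simp
qed

lemma convex_strict_epigraph:
  assumes "convex_on S u"
  shows "convex {(y, t). y \<in> S \<and> u y < t}"
proof -
  have "{(y, t). y \<in> S \<and> u y < t} = epigraph S u + {0} \<times> {0<..}"
  proof (intro set_eqI iffI; clarify)
    fix y t assume "y \<in> S" "u y < t"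
    then have "(y, u y) + (0, t - u y) \<in> epigraph S u + {0} \<times> {0<..}"
      by (intro set_plus_intro) (auto simp: mem_epigraph)
    then show "(y, t) \<in> epigraph S u + {0} \<times> {0<..}" by simp
  qed (auto simp: set_plus_def mem_epigraph)
  then show ?thesis
    using assms by (simp add: convex_set_plus convex_epigraph convex_Times)
qed

lemma convex_on_subgradient:
  fixes u :: "'a::euclidean_space \<Rightarrow> real"
  assumes "open S" "convex_on S u" "z \<in> S"
  shows "\<exists>s. \<forall>y\<in>S. u z + s \<bullet> (y - z) \<le> u y"
proof -
  \<comment> \<open>separate (z, u z) from the strict epigraph; as z is interior, the hyperplane is not vertical\<close>
  have "\<exists>p b. p \<noteq> 0 \<and> (\<forall>q\<in>{(z, u z)}. p \<bullet> q \<le> b) \<and>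
      (\<forall>q\<in>{(y, t). y \<in> S \<and> u y < t}. b \<le> p \<bullet> q)"
    using assms(3) by (intro separating_hyperplane_sets convex_strict_epigraph[OF assms(2)]) (auto intro: gt_ex)
  then obtain a \<alpha> b where "(a, \<alpha>) \<noteq> 0" and below: "a \<bullet> z + \<alpha> * u z \<le> b"
    and above: "\<And>y t. y \<in> S \<Longrightarrow> u y < t \<Longrightarrow> b \<le> a \<bullet> y + \<alpha> * t"
    by fastforce
  have "0 \<le> \<alpha>"
    using below above[OF assms(3), of "u z + 1"] by (simp add: algebra_simps)
  moreover have "\<alpha> \<noteq> 0"
  proof
    assume "\<alpha> = 0"
    have "a \<bullet> z \<le> a \<bullet> y" if "y \<in> S" for y
      using below above[OF that, of "u y + 1"] \<open>\<alpha> = 0\<close> by simp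
    moreover have "(inner a has_derivative inner a) (at z)"
      by (rule bounded_linear_imp_has_derivative[OF bounded_linear_inner_right])
    ultimately have "inner a = (\<lambda>h. 0)"
      using differential_zero_maxmin[OF assms(3,1)] by blast
    then have "a = 0" by (metis inner_eq_zero_iff)
    with \<open>(a, \<alpha>) \<noteq> 0\<close> \<open>\<alpha> = 0\<close> show False by (simp add: zero_prod_def)
  qed
  ultimately have "\<alpha> > 0" by simp
  have "a \<bullet> z + \<alpha> * u z \<le> a \<bullet> y + \<alpha> * u y" if "y \<in> S" for y
  proof (rule field_le_epsilon)
    fix e :: real assume "e > 0"
    with \<open>\<alpha> > 0\<close> have "b \<le> a \<bullet> y + \<alpha> * (u y + e / \<alpha>)"
      by (intro above that) auto
    with below \<open>\<alpha> > 0\<close> show "a \<bullet> z + \<alpha> * u z \<le> a \<bullet> y + \<alpha> * u y + e"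
      by (simp add: distrib_left)
  qed
  then show ?thesis
    using \<open>\<alpha> > 0\<close> by (intro exI[of _ "- (1 / \<alpha>) *\<^sub>R a"]) (simp add: inner_diff_right field_simps)
qed

lemma subgradient_norm_bound:
  fixes u :: "'a::real_inner \<Rightarrow> real"
  assumes "0 < \<delta>"
    and subgrad: "\<And>y. y \<in> cball z \<delta> \<Longrightarrow> u z + s \<bullet> (y - z) \<le> u y"
    and bound: "\<And>y. y \<in> cball z \<delta> \<Longrightarrow> \<bar>u y\<bar> \<le> M"
  shows "\<delta> * norm s \<le> 2 * M"
proof (cases "s = 0")
  case True
  then show ?thesis using bound[of z] assms(1) by simp
next
  case False
  define y where "y = z + (\<delta> / norm s) *\<^sub>R s"
  have "y \<in> cball z \<delta>"
    using False assms(1) by (simp add: y_def dist_norm)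
  moreover have "s \<bullet> (y - z) = \<delta> * norm s"
    using False by (simp add: y_def power2_norm_eq_inner[symmetric] power2_eq_square)
  ultimately show ?thesis
    using subgrad[of y] bound[of y] bound[of z] assms(1) by force
qed

lemma subgradients_locally_bounded:
  fixes u :: "'a::euclidean_space \<Rightarrow> real"
  assumes "open S" "convex_on S u" "x \<in> S"
    and subgrad: "\<And>z y. z \<in> S \<Longrightarrow> y \<in> S \<Longrightarrow> u z + \<sigma> z \<bullet> (y - z) \<le> u y"
  shows "\<exists>\<delta>>0. \<exists>B. \<forall>z\<in>ball x \<delta>. norm (\<sigma> z) \<le> B"
proof -
  obtain e where "0 < e" "cball x e \<subseteq> S"
    using assms(1,3) open_contains_cball by blast
  define \<delta> where "\<delta> = e / 2"
  have "0 < \<delta>" and \<delta>: "cball x (2 * \<delta>) \<subseteq> S"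
    using \<open>0 < e\<close> \<open>cball x e \<subseteq> S\<close> by (simp_all add: \<delta>_def)
  have "compact (u ` cball x (2 * \<delta>))"
    using convex_on_continuous[OF assms(1,2)] \<delta>
    by (intro compact_continuous_image) (auto intro: continuous_on_subset)
  then obtain M where M: "\<And>y. y \<in> cball x (2 * \<delta>) \<Longrightarrow> \<bar>u y\<bar> \<le> M"
    by (meson bounded_real compact_imp_bounded imageI)
  have "norm (\<sigma> z) \<le> 2 * M / \<delta>" if "z \<in> ball x \<delta>" for z
  proof -
    have "cball z \<delta> \<subseteq> cball x (2 * \<delta>)"
      using that by (simp add: cball_subset_cball_iff dist_commute)
    with \<delta> have "cball z \<delta> \<subseteq> S" by blast
    with \<open>cball z \<delta> \<subseteq> cball x (2 * \<delta>)\<close> have "\<delta> * norm (\<sigma> z) \<le> 2 * M"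
      using \<open>0 < \<delta>\<close> by (intro subgradient_norm_bound[of \<delta> z u "\<sigma> z"] subgrad M) auto
    with \<open>0 < \<delta>\<close> show ?thesis by (simp add: field_simps)
  qed
  with \<open>0 < \<delta>\<close> show ?thesis
    by blast
qed

lemma subgradient_minorants_tendsto:
  fixes u :: "'a::euclidean_space \<Rightarrow> real"
  assumes "open S" "convex_on S u" "x \<in> S"
    and subgrad: "\<And>z y. z \<in> S \<Longrightarrow> y \<in> S \<Longrightarrow> u z + \<sigma> z \<bullet> (y - z) \<le> u y"
  shows "((\<lambda>z. u z + \<sigma> z \<bullet> (x - z)) \<longlongrightarrow> u x) (at x within S)"
proof -
  obtain \<delta> B where "0 < \<delta>" and B: "\<And>z. z \<in> ball x \<delta> \<Longrightarrow> norm (\<sigma> z) \<le> B"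
    using subgradients_locally_bounded[OF assms] by blast
  have "\<forall>\<^sub>F z in at x within S. norm (\<sigma> z \<bullet> (x - z)) \<le> B * norm (x - z)"
    using eventually_at_ball[OF \<open>0 < \<delta>\<close>, of x S]
  proof eventually_elim
    case (elim z)
    have "\<bar>\<sigma> z \<bullet> (x - z)\<bar> \<le> norm (\<sigma> z) * norm (x - z)"
      by (rule Cauchy_Schwarz_ineq2)
    also have "\<dots> \<le> B * norm (x - z)"
      using elim by (intro mult_right_mono B) auto
    finally show ?case by simp
  qed
  moreover have "((\<lambda>z. B * norm (x - z)) \<longlongrightarrow> 0) (at x within S)"
    by (auto intro!: tendsto_eq_intros)
  ultimately have "((\<lambda>z. \<sigma> z \<bullet> (x - z)) \<longlongrightarrow> 0) (at x within S)"
    by (rule Lim_null_comparison)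
  moreover have "(u \<longlongrightarrow> u x) (at x within S)"
    using convex_on_continuous[OF assms(1,2)] assms(3) by (simp add: continuous_on_def)
  ultimately show ?thesis
    using tendsto_add by fastforce
qed

definition max_affine :: "('a::real_inner \<times> real) set \<Rightarrow> 'a \<Rightarrow> real" where
  "max_affine A x = Max ((\<lambda>(s, c). s \<bullet> x + c) ` A)"

lemma max_affine_ge:
  assumes "finite A" "(s, c) \<in> A"
  shows "s \<bullet> x + c \<le> max_affine A x"
  unfolding max_affine_def using assms by (intro Max_ge) auto

lemma max_affine_attained:
  assumes "finite A" "A \<noteq> {}"
  shows "\<exists>(s, c)\<in>A. max_affine A x = s \<bullet> x + c"
proof -
  have "max_affine A x \<in> (\<lambda>(s, c). s \<bullet> x + c) ` A"
    unfolding max_affine_def using assms by (intro Max_in) auto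
  then show ?thesis by auto
qed

lemma max_affine_le_iff:
  assumes "finite A" "A \<noteq> {}"
  shows "max_affine A x \<le> y \<longleftrightarrow> (\<forall>(s, c)\<in>A. s \<bullet> x + c \<le> y)"
  unfolding max_affine_def using assms by (auto simp: Max_le_iff)

lemma max_affine_mono:
  assumes "finite B" "A \<subseteq> B" "A \<noteq> {}"
  shows "max_affine A x \<le> max_affine B x"
  unfolding max_affine_def using assms by (intro Max_mono image_mono) auto

lemma max_affine_scale:
  assumes "finite A" "A \<noteq> {}" "0 \<le> t"
  shows "max_affine ((\<lambda>(s, c). (t *\<^sub>R s, t * c)) ` A) x = t * max_affine A x"
proof -
  have "t * max_affine A x = Max ((*) t ` (\<lambda>(s, c). s \<bullet> x + c) ` A)"
    unfolding max_affine_def using assms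
    by (intro mono_Max_commute) (auto intro: monoI mult_left_mono)
  then show ?thesis
    by (simp add: max_affine_def image_image case_prod_beta algebra_simps)
qed

lemma convex_on_max_affine:
  assumes "finite A" "A \<noteq> {}" "convex S"
  shows "convex_on S (max_affine A)"
proof (rule convex_onI[OF _ assms(3)])
  fix t :: real and x y :: 'a
  assume "0 < t" "t < 1"
  obtain s c where sc: "(s, c) \<in> A"
    and max: "max_affine A ((1 - t) *\<^sub>R x + t *\<^sub>R y) = s \<bullet> ((1 - t) *\<^sub>R x + t *\<^sub>R y) + c"
    using max_affine_attained[OF assms(1,2)] by blast
  have "s \<bullet> ((1 - t) *\<^sub>R x + t *\<^sub>R y) + c = (1 - t) * (s \<bullet> x + c) + t * (s \<bullet> y + c)"
    by (simp add: inner_add_right algebra_simps)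
  also have "\<dots> \<le> (1 - t) * max_affine A x + t * max_affine A y"
    using \<open>t < 1\<close> \<open>0 < t\<close> max_affine_ge[OF assms(1) sc]
    by (intro add_mono mult_left_mono) auto
  finally show "max_affine A ((1 - t) *\<^sub>R x + t *\<^sub>R y) \<le> (1 - t) * max_affine A x + t * max_affine A y"
    by (simp add: max)
qed

lemma continuous_on_max_affine:
  fixes A :: "('a::euclidean_space \<times> real) set"
  assumes "finite A" "A \<noteq> {}"
  shows "continuous_on S (max_affine A)"
  using convex_on_continuous[OF open_UNIV convex_on_max_affine[OF assms convex_UNIV]]
  by (rule continuous_on_subset) simp

lemma max_affine_has_derivative:
  assumes "finite A" "(s, c) \<in> A" "max_affine A x = s \<bullet> x + c"
    and no_tie: "\<And>s' c'. (s', c') \<in> A \<Longrightarrow> (s', c') \<noteq> (s, c) \<Longrightarrow> s' \<bullet> x + c' \<noteq> s \<bullet> x + c"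
  shows "(max_affine A has_derivative (\<lambda>h. s \<bullet> h)) (at x)"
proof -
  have "\<forall>\<^sub>F y in at x. s' \<bullet> y + c' \<le> s \<bullet> y + c" if "(s', c') \<in> A" for s' c'
  proof (cases "(s', c') = (s, c)")
    case False
    have "((\<lambda>y. (s - s') \<bullet> y + (c - c')) \<longlongrightarrow> (s - s') \<bullet> x + (c - c')) (at x)"
      by (intro tendsto_intros)
    moreover have "0 < (s - s') \<bullet> x + (c - c')"
      using False no_tie that max_affine_ge[OF assms(1) that, of x] assms(3)
      by (force simp: inner_diff_left)
    ultimately show ?thesis
      by (rule order_tendstoD(1)[THEN eventually_mono]) (simp add: inner_diff_left)
  qed simp
  then have "\<forall>\<^sub>F y in at x. \<forall>(s', c')\<in>A. s' \<bullet> y + c' \<le> s \<bullet> y + c"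
    using assms(1) by (auto intro: eventually_ball_finite)
  then have agree: "\<forall>\<^sub>F y in at x. s \<bullet> y + c = max_affine A y"
  proof eventually_elim
    case (elim y)
    then have "max_affine A y \<le> s \<bullet> y + c"
      using assms(2) by (subst max_affine_le_iff[OF assms(1)]) auto
    then show ?case
      using max_affine_ge[OF assms(1,2), of y] by simp
  qed
  have "((\<lambda>y. s \<bullet> y + c) has_derivative (\<lambda>h. s \<bullet> h)) (at x)"
    by (auto intro!: derivative_eq_intros)
  then show ?thesis
    by (rule has_derivative_transform_eventually[OF _ agree]) (simp_all add: assms(3))
qed

lemma max_affine_admissible:
  fixes A :: "('a::euclidean_space \<times> real) set"
  assumes "finite A" "A \<noteq> {}" "fst ` A \<subseteq> K" "convex \<Omega>"
  shows "max_affine A \<in> admissible \<Omega> K"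
proof -
  define ties where "ties = (\<Union>(p, q)\<in>A \<times> A - Id. {x. (fst q - fst p) \<bullet> x = snd p - snd q})"
  have "\<exists>g\<in>K. (max_affine A has_derivative (\<lambda>h. g \<bullet> h)) (at x)" if "x \<notin> ties" for x
  proof -
    obtain s c where sc: "(s, c) \<in> A" "max_affine A x = s \<bullet> x + c"
      using max_affine_attained[OF assms(1,2)] by blast
    have "(max_affine A has_derivative (\<lambda>h. s \<bullet> h)) (at x)"
    proof (rule max_affine_has_derivative[OF assms(1) sc])
      fix s' c' assume "(s', c') \<in> A" "(s', c') \<noteq> (s, c)"
      with sc(1) have "((s, c), (s', c')) \<in> A \<times> A - Id" by auto
      then have "{y. (s' - s) \<bullet> y = c - c'} \<subseteq> ties"
        unfolding ties_def by (force intro: UN_upper)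
      then have "(s' - s) \<bullet> x \<noteq> c - c'"
        using that by blast
      then show "s' \<bullet> x + c' \<noteq> s \<bullet> x + c"
        by (simp add: inner_diff_left algebra_simps)
    qed
    then show ?thesis
      using sc(1) assms(3) by force
  qed
  moreover have "negligible ties"
    unfolding ties_def using assms(1)
    by (intro negligible_Union) (auto intro!: negligible_hyperplane)
  ultimately have "AE x in lebesgue. x \<in> \<Omega> \<longrightarrow> (\<exists>g\<in>K. (max_affine A has_derivative (\<lambda>h. g \<bullet> h)) (at x))"
    by (intro AE_I'[of ties]) (auto simp: negligible_iff_null_sets)
  then show ?thesis
    unfolding admissible_def using convex_on_max_affine[OF assms(1,2,4)] by simp
qed

lemma dense_sequence:
  fixes S :: "'a::euclidean_space set"
  assumes "open S" "S \<noteq> {}"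
  shows "\<exists>d :: nat \<Rightarrow> 'a. range d \<subseteq> S \<and> S \<subseteq> closure (range d)"
proof -
  obtain D :: "'a set" where "countable D" and D: "\<And>U. open U \<Longrightarrow> U \<noteq> {} \<Longrightarrow> \<exists>y\<in>D. y \<in> U"
    using countable_dense_setE by blast
  have "S \<subseteq> closure (D \<inter> S)"
  proof (clarsimp simp: closure_approachable)
    fix x and e :: real assume "x \<in> S" "0 < e"
    then have "open (ball x e \<inter> S)" "x \<in> ball x e \<inter> S"
      using assms(1) by auto
    then obtain y where "y \<in> D" "y \<in> ball x e \<inter> S"
      using D by blast
    then show "\<exists>y\<in>D \<inter> S. dist y x < e"
      by (auto simp: dist_commute)
  qed
  moreover from this assms(2) have "D \<inter> S \<noteq> {}"
    by auto
  with \<open>countable D\<close> have "range (from_nat_into (D \<inter> S)) = D \<inter> S"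
    by simp
  ultimately show ?thesis
    by (intro exI[of _ "from_nat_into (D \<inter> S)"]) auto
qed

lemma subgradient_minorants_approach:
  fixes u :: "'a::euclidean_space \<Rightarrow> real"
  assumes "open S" "convex_on S u" "x \<in> S" "0 < r"
    and subgrad: "\<And>z y. z \<in> S \<Longrightarrow> y \<in> S \<Longrightarrow> u z + \<sigma> z \<bullet> (y - z) \<le> u y"
    and "range d \<subseteq> S" "S \<subseteq> closure (range d)"
  shows "\<exists>k. u x - r < u (d k) + \<sigma> (d k) \<bullet> (x - d k)"
proof -
  have "((\<lambda>z. u z + \<sigma> z \<bullet> (x - z)) \<longlongrightarrow> u x) (at x within S)"
    using subgrad by (rule subgradient_minorants_tendsto[OF assms(1-3)])
  then have "\<forall>\<^sub>F z in at x within S. u x - r < u z + \<sigma> z \<bullet> (x - z)"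
    by (rule order_tendstoD) (use \<open>0 < r\<close> in simp)
  then obtain \<rho> where "0 < \<rho>"
    and near: "\<And>z. z \<in> S \<Longrightarrow> dist z x < \<rho> \<Longrightarrow> u x - r < u z + \<sigma> z \<bullet> (x - z)"
    using \<open>0 < r\<close> by (force simp: eventually_at)
  have "x \<in> closure (range d)"
    using assms(3,7) by blast
  then obtain k where "dist (d k) x < \<rho>"
    using \<open>0 < \<rho>\<close> by (auto simp: closure_approachable)
  then show ?thesis
    using near assms(6) by blast
qed

lemma convex_on_approx_max_affine:
  fixes u :: "'a::euclidean_space \<Rightarrow> real"
  assumes "open S" "convex_on S u" "S \<noteq> {}"
  shows "\<exists>A :: nat \<Rightarrow> ('a \<times> real) set. (\<forall>n. finite (A n) \<and> A n \<noteq> {}) \<and> incseq A \<and>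
    (\<forall>n. \<forall>x\<in>S. max_affine (A n) x \<le> u x) \<and> (\<forall>x\<in>S. (\<lambda>n. max_affine (A n) x) \<longlonglongrightarrow> u x)"
proof -
  have "\<forall>z\<in>S. \<exists>s. \<forall>y\<in>S. u z + s \<bullet> (y - z) \<le> u y"
    using convex_on_subgradient[OF assms(1,2)] by blast
  from bchoice[OF this] obtain \<sigma> where
    \<sigma>: "\<And>z y. z \<in> S \<Longrightarrow> y \<in> S \<Longrightarrow> u z + \<sigma> z \<bullet> (y - z) \<le> u y"
    by blast
  obtain d :: "nat \<Rightarrow> 'a" where d: "range d \<subseteq> S" "S \<subseteq> closure (range d)"
    using dense_sequence[OF assms(1,3)] by blast
  define A where "A n = (\<lambda>k. (\<sigma> (d k), u (d k) - \<sigma> (d k) \<bullet> d k)) ` {..n}" for n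
  have fin: "finite (A n)" and ne: "A n \<noteq> {}" for n
    by (auto simp: A_def)
  have below_max: "u (d k) + \<sigma> (d k) \<bullet> (x - d k) \<le> max_affine (A n) x" if "k \<le> n" for k n x
    using max_affine_ge[OF fin, of "\<sigma> (d k)" "u (d k) - \<sigma> (d k) \<bullet> d k" n x] that
    by (simp add: A_def inner_diff_right)
  have le: "max_affine (A n) x \<le> u x" if "x \<in> S" for n x
  proof -
    have "u (d k) + \<sigma> (d k) \<bullet> (x - d k) \<le> u x" for k
      using \<sigma> that d(1) by blast
    then show ?thesis
      unfolding max_affine_le_iff[OF fin ne] by (auto simp: A_def inner_diff_right algebra_simps)
  qed
  have "(\<lambda>n. max_affine (A n) x) \<longlonglongrightarrow> u x" if "x \<in> S" for x
  proof (rule LIMSEQ_I)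
    fix r :: real assume "0 < r"
    obtain k where "u x - r < u (d k) + \<sigma> (d k) \<bullet> (x - d k)"
      using subgradient_minorants_approach[OF assms(1,2) \<open>x \<in> S\<close> \<open>0 < r\<close> \<sigma> d] by blast
    then have "\<bar>max_affine (A n) x - u x\<bar> < r" if "k \<le> n" for n
      using below_max[OF that, of x] le[OF \<open>x \<in> S\<close>, of n] by linarith
    then show "\<exists>no. \<forall>n\<ge>no. norm (max_affine (A n) x - u x) < r"
      by auto
  qed
  moreover have "incseq A"
    by (auto simp: incseq_def A_def)
  ultimately show ?thesis
    using fin ne le by (intro exI[of _ A]) simp
qed

lemma open_subset_closure_AE:
  fixes S :: "'a::euclidean_space set"
  assumes "open S" "AE x in lebesgue. x \<in> S \<longrightarrow> P x"
  shows "S \<subseteq> closure {x \<in> S. P x}"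
proof
  fix x assume "x \<in> S"
  show "x \<in> closure {x \<in> S. P x}"
  proof (rule ccontr)
    assume "x \<notin> closure {x \<in> S. P x}"
    then obtain e where "0 < e" and e: "\<And>y. y \<in> S \<Longrightarrow> P y \<Longrightarrow> e \<le> dist y x"
      by (force simp: closure_approachable not_less)
    have "AE y in lebesgue. y \<notin> ball x e \<inter> S"
      using assms(2) by eventually_elim (use e in \<open>force simp: dist_commute\<close>)
    then have "negligible (ball x e \<inter> S)"
      using assms(1) by (simp add: negligible_iff_null_sets AE_iff_null_sets)
    moreover have "x \<in> ball x e \<inter> S"
      using \<open>0 < e\<close> \<open>x \<in> S\<close> by simp
    ultimately show False
      using open_not_negligible[of "ball x e \<inter> S"] assms(1) by blast
  qed
qed

lemma admissible_lipschitz: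
  fixes u :: "'a::euclidean_space \<Rightarrow> real"
  assumes "open \<Omega>" "u \<in> admissible \<Omega> K" "\<And>g. g \<in> K \<Longrightarrow> norm g \<le> R" "x \<in> \<Omega>" "y \<in> \<Omega>"
  shows "dist (u x) (u y) \<le> R * dist x y"
proof -
  have convex: "convex_on \<Omega> u"
    and AE: "AE x in lebesgue. x \<in> \<Omega> \<longrightarrow> (\<exists>g\<in>K. (u has_derivative (\<lambda>h. g \<bullet> h)) (at x))"
    using assms(2) by (auto simp: admissible_def)
  define D where "D = {z \<in> \<Omega>. \<exists>g\<in>K. (u has_derivative (\<lambda>h. g \<bullet> h)) (at z)}"
  have tangent: "u z - R * dist z y \<le> u y" if "z \<in> D" "y \<in> \<Omega>" for z y
  proof -
    obtain g where "g \<in> K" "z \<in> \<Omega>" and deriv: "(u has_derivative (\<lambda>h. g \<bullet> h)) (at z)"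
      using \<open>z \<in> D\<close> by (auto simp: D_def)
    have "\<bar>g \<bullet> (y - z)\<bar> \<le> norm g * norm (y - z)"
      by (rule Cauchy_Schwarz_ineq2)
    also have "\<dots> \<le> R * dist z y"
      using assms(3)[OF \<open>g \<in> K\<close>] by (simp add: dist_norm norm_minus_commute mult_right_mono)
    finally have "\<bar>g \<bullet> (y - z)\<bar> \<le> R * dist z y" .
    then show ?thesis
      using convex_on_imp_above_tangent_plane[OF convex \<open>z \<in> \<Omega>\<close> \<open>y \<in> \<Omega>\<close> deriv] by linarith
  qed
  have "u x - R * dist x y \<le> u y" if "x \<in> \<Omega>" "y \<in> \<Omega>" for x y
  proof -
    have "x \<in> closure D"
      using open_subset_closure_AE[OF assms(1) AE] that(1) unfolding D_def by blast
    then obtain z where z: "\<And>n. z n \<in> D" "z \<longlonglongrightarrow> x"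
      by (auto simp: closure_sequential)
    have "(\<lambda>n. u (z n)) \<longlonglongrightarrow> u x"
      using convex_on_continuous[OF assms(1) convex] z that(1)
      by (intro continuous_on_tendsto_compose[of \<Omega> u]) (auto simp: D_def)
    then have "(\<lambda>n. u (z n) - R * dist (z n) y) \<longlonglongrightarrow> u x - R * dist x y"
      by (intro tendsto_intros z(2))
    then show ?thesis
      by (rule LIMSEQ_le_const2) (use tangent[OF z(1) that(2)] in blast)
  qed
  from this[OF assms(4,5)] this[OF assms(5,4)] show ?thesis
    by (simp add: dist_real_def dist_commute)
qed

lemma space_restrict_borel:
  assumes "sets M = sets (restrict_space borel \<Omega>)"
  shows "space M = \<Omega>"
  using sets_eq_imp_space_eq[OF assms] by (simp add: space_restrict_space)

lemma continuous_on_borel_measurable_restrict: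
  fixes f :: "'a::topological_space \<Rightarrow> 'b::topological_space"
  assumes "sets M = sets (restrict_space borel \<Omega>)" "continuous_on \<Omega> f"
  shows "f \<in> borel_measurable M"
  using borel_measurable_continuous_on_restrict[OF assms(2)] measurable_cong_sets[OF assms(1) refl]
  by blast

lemma integrable_bounded_continuous_on:
  fixes f :: "'a::topological_space \<Rightarrow> real"
  assumes "finite_measure M" "sets M = sets (restrict_space borel \<Omega>)"
    and "continuous_on \<Omega> f" "bounded (f ` \<Omega>)"
  shows "integrable M f"
proof -
  obtain B where "\<And>x. x \<in> \<Omega> \<Longrightarrow> norm (f x) \<le> B"
    using assms(4) by (auto simp: bounded_iff)
  then have "AE x in M. norm (f x) \<le> B"
    using space_restrict_borel[OF assms(2)] by (intro AE_I2) auto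
  then show ?thesis
    using finite_measure.integrable_const_bound[OF assms(1)]
      continuous_on_borel_measurable_restrict[OF assms(2,3)] by blast
qed

lemma admissible_integrable:
  fixes u :: "'a::euclidean_space \<Rightarrow> real"
  assumes "bounded \<Omega>" "open \<Omega>" "compact K" "u \<in> admissible \<Omega> K"
    and "finite_measure M" "sets M = sets (restrict_space borel \<Omega>)"
  shows "integrable M u"
proof (rule integrable_bounded_continuous_on[OF assms(5,6)])
  show "continuous_on \<Omega> u"
    using assms(4) by (intro convex_on_continuous[OF assms(2)]) (simp add: admissible_def)
  obtain R where "0 < R" and R: "\<And>g. g \<in> K \<Longrightarrow> norm g \<le> R"
    using compact_imp_bounded[OF assms(3)] by (auto simp: bounded_pos)
  show "bounded (u ` \<Omega>)"
  proof (cases "\<Omega> = {}")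
    case False
    then obtain x0 where "x0 \<in> \<Omega>" by blast
    have "dist (u x0) (u x) \<le> R * diameter \<Omega>" if "x \<in> \<Omega>" for x
      using admissible_lipschitz[OF assms(2,4) R \<open>x0 \<in> \<Omega>\<close> that]
        diameter_bounded_bound[OF assms(1) \<open>x0 \<in> \<Omega>\<close> that] \<open>0 < R\<close>
      by (meson less_imp_le mult_left_mono order_trans)
    then show ?thesis
      by (auto simp: bounded_def)
  qed simp
qed

lemma integral_tendsto_sandwich:
  fixes a u :: "'a \<Rightarrow> real"
  assumes "integrable M a" "integrable M u" "\<And>n. v n \<in> borel_measurable M"
    and "AE x in M. (\<lambda>n. v n x) \<longlonglongrightarrow> u x"
    and "\<And>n. AE x in M. a x \<le> v n x \<and> v n x \<le> u x"
  shows "(\<lambda>n. integral\<^sup>L M (v n)) \<longlonglongrightarrow> integral\<^sup>L M u"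
proof (rule integral_dominated_convergence[where w = "\<lambda>x. \<bar>a x\<bar> + \<bar>u x\<bar>"])
  show "AE x in M. norm (v n x) \<le> \<bar>a x\<bar> + \<bar>u x\<bar>" for n
    using assms(5)[of n] by eventually_elim auto
qed (use assms in auto)

lemma zero_admissible:
  assumes "convex \<Omega>" "0 \<in> K"
  shows "(\<lambda>_. 0) \<in> admissible \<Omega> (K :: 'a::euclidean_space set)"
proof -
  have "max_affine {(0::'a, 0)} = (\<lambda>_. 0)"
    by (simp add: max_affine_def fun_eq_iff)
  then show ?thesis
    using max_affine_admissible[of "{(0, 0)}" K \<Omega>] assms by simp
qed

lemma max_affine_integral_le:
  fixes A :: "('a::euclidean_space \<times> real) set"
  assumes "convex \<Omega>" "0 \<in> interior K" "finite A" "A \<noteq> {}"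
    and adm: "\<And>w. w \<in> admissible \<Omega> K \<Longrightarrow> integral\<^sup>L \<mu>m w - integral\<^sup>L \<mu>p w \<le> 0"
  shows "integral\<^sup>L \<mu>m (max_affine A) - integral\<^sup>L \<mu>p (max_affine A) \<le> 0"
proof -
  obtain r where "0 < r" "ball 0 r \<subseteq> K"
    using assms(2) by (auto simp: mem_interior)
  define N where "N = (\<Sum>p\<in>A. norm (fst p))"
  define t where "t = r / (1 + N)"
  have "0 \<le> N"
    unfolding N_def by (intro sum_nonneg) auto
  then have "0 < t"
    using \<open>0 < r\<close> by (simp add: t_def)
  define A' where "A' = (\<lambda>(s, c). (t *\<^sub>R s, t * c)) ` A"
  have "fst ` A' \<subseteq> K"
  proof (clarsimp simp: A'_def)
    fix s c assume "(s, c) \<in> A"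
    then have "norm s \<le> N"
      unfolding N_def using member_le_sum[of "(s, c)" A "\<lambda>p. norm (fst p)"] assms(3) by auto
    then have "t * norm s < t * (1 + N)"
      using \<open>0 < t\<close> by simp
    also have "\<dots> = r"
      using \<open>0 \<le> N\<close> by (simp add: t_def)
    finally show "t *\<^sub>R s \<in> K"
      using \<open>0 < t\<close> \<open>ball 0 r \<subseteq> K\<close> by auto
  qed
  then have "max_affine A' \<in> admissible \<Omega> K"
    using assms(1,3,4) by (intro max_affine_admissible) (auto simp: A'_def)
  moreover have "max_affine A' = (\<lambda>x. t * max_affine A x)"
    using max_affine_scale[OF assms(3,4)] \<open>0 < t\<close> by (auto simp: A'_def)
  ultimately have "(\<lambda>x. t * max_affine A x) \<in> admissible \<Omega> K"
    by simp
  from adm[OF this]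
  have "t * (integral\<^sup>L \<mu>m (max_affine A) - integral\<^sup>L \<mu>p (max_affine A)) \<le> 0"
    by (simp add: right_diff_distrib)
  then show ?thesis
    using \<open>0 < t\<close> by (simp add: mult_le_0_iff)
qed

lemma convex_integral_le_if_admissible:
  fixes \<Omega> K :: "'a::euclidean_space set" and u :: "'a \<Rightarrow> real"
  assumes "bounded \<Omega>" "open \<Omega>" "\<Omega> \<noteq> {}" "0 \<in> interior K"
    and "finite_measure \<mu>p" "sets \<mu>p = sets (restrict_space borel \<Omega>)"
    and "finite_measure \<mu>m" "sets \<mu>m = sets (restrict_space borel \<Omega>)"
    and adm: "\<And>w. w \<in> admissible \<Omega> K \<Longrightarrow> integral\<^sup>L \<mu>m w - integral\<^sup>L \<mu>p w \<le> 0"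
    and "convex_on \<Omega> u" "integrable \<mu>p u" "integrable \<mu>m u"
  shows "integral\<^sup>L \<mu>m u - integral\<^sup>L \<mu>p u \<le> 0"
proof -
  obtain A :: "nat \<Rightarrow> ('a \<times> real) set"
    where A: "\<forall>n. finite (A n) \<and> A n \<noteq> {}" "incseq A"
      "\<forall>n. \<forall>x\<in>\<Omega>. max_affine (A n) x \<le> u x" "\<forall>x\<in>\<Omega>. (\<lambda>n. max_affine (A n) x) \<longlonglongrightarrow> u x"
    using convex_on_approx_max_affine[OF assms(2,10,3)] by (elim exE conjE) blast
  then have fin: "finite (A n)" and ne: "A n \<noteq> {}" for n
    by simp_all
  have above_first: "max_affine (A 0) x \<le> max_affine (A n) x" for n x
    by (rule max_affine_mono[OF fin _ ne]) (use A(2) in \<open>simp add: incseq_def\<close>)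
  have "(\<lambda>n. integral\<^sup>L M (max_affine (A n))) \<longlonglongrightarrow> integral\<^sup>L M u"
    if M: "finite_measure M" "sets M = sets (restrict_space borel \<Omega>)" "integrable M u" for M
  proof (rule integral_tendsto_sandwich[OF _ M(3)])
    have "compact (max_affine (A 0) ` closure \<Omega>)"
      using assms(1) by (intro compact_continuous_image continuous_on_max_affine fin ne) auto
    then have "bounded (max_affine (A 0) ` \<Omega>)"
      by (meson bounded_subset closure_subset compact_imp_bounded image_mono)
    then show "integrable M (max_affine (A 0))"
      by (intro integrable_bounded_continuous_on[OF M(1,2)] continuous_on_max_affine fin ne)
    show "max_affine (A n) \<in> borel_measurable M" for n
      by (intro continuous_on_borel_measurable_restrict[OF M(2)] continuous_on_max_affine fin ne)
    show "AE x in M. (\<lambda>n. max_affine (A n) x) \<longlonglongrightarrow> u x"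
      using A(4) by (intro AE_I2) (simp add: space_restrict_borel[OF M(2)])
    show "AE x in M. max_affine (A 0) x \<le> max_affine (A n) x \<and> max_affine (A n) x \<le> u x" for n
      using A(3) above_first by (intro AE_I2) (simp add: space_restrict_borel[OF M(2)])
  qed
  then have "(\<lambda>n. integral\<^sup>L \<mu>m (max_affine (A n)) - integral\<^sup>L \<mu>p (max_affine (A n)))
      \<longlonglongrightarrow> integral\<^sup>L \<mu>m u - integral\<^sup>L \<mu>p u"
    using assms(5-8,11,12) by (intro tendsto_diff)
  moreover have "integral\<^sup>L \<mu>m (max_affine (A n)) - integral\<^sup>L \<mu>p (max_affine (A n)) \<le> 0" for n
    using adm by (rule max_affine_integral_le[OF convex_on_imp_convex[OF assms(10)] assms(4) fin ne])
  ultimately show ?thesis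
    by (intro LIMSEQ_le_const2) auto
qed

lemma admissible_nonpos_iff_convex_nonpos:
  fixes \<Omega> K :: "'a::euclidean_space set"
  assumes "bounded \<Omega>" "open \<Omega>" "\<Omega> \<noteq> {}" "compact K" "0 \<in> interior K"
    and "finite_measure \<mu>p" "sets \<mu>p = sets (restrict_space borel \<Omega>)"
    and "finite_measure \<mu>m" "sets \<mu>m = sets (restrict_space borel \<Omega>)"
  shows "(\<forall>w\<in>admissible \<Omega> K. integral\<^sup>L \<mu>m w - integral\<^sup>L \<mu>p w \<le> 0) \<longleftrightarrow>
    (\<forall>u. convex_on \<Omega> u \<and> integrable \<mu>p u \<and> integrable \<mu>m u \<longrightarrow> integral\<^sup>L \<mu>m u - integral\<^sup>L \<mu>p u \<le> 0)"
proof (intro iffI allI ballI impI)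
  fix u assume "\<forall>w\<in>admissible \<Omega> K. integral\<^sup>L \<mu>m w - integral\<^sup>L \<mu>p w \<le> 0"
    and "convex_on \<Omega> u \<and> integrable \<mu>p u \<and> integrable \<mu>m u"
  then show "integral\<^sup>L \<mu>m u - integral\<^sup>L \<mu>p u \<le> 0"
    using convex_integral_le_if_admissible[OF assms(1-3,5-9)] by blast
next
  fix w assume "w \<in> admissible \<Omega> K"
    and "\<forall>u. convex_on \<Omega> u \<and> integrable \<mu>p u \<and> integrable \<mu>m u \<longrightarrow> integral\<^sup>L \<mu>m u - integral\<^sup>L \<mu>p u \<le> 0"
  moreover have "convex_on \<Omega> w"
    using \<open>w \<in> admissible \<Omega> K\<close> by (simp add: admissible_def)
  ultimately show "integral\<^sup>L \<mu>m w - integral\<^sup>L \<mu>p w \<le> 0"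
    using admissible_integrable[OF assms(1,2,4) _ assms(6,7)]
      admissible_integrable[OF assms(1,2,4) _ assms(8,9)] by blast
qed

theorem proposition2:
  fixes \<Omega> K :: "'a::euclidean_space set" and \<mu>p \<mu>m :: "'a measure"
  assumes "bounded \<Omega>" "open \<Omega>" "convex \<Omega>"
    and "compact K" "0 \<in> interior K"
    and "prob_space \<mu>p" "sets \<mu>p = sets (restrict_space borel \<Omega>)"
    and "prob_space \<mu>m" "sets \<mu>m = sets (restrict_space borel \<Omega>)"
  shows "VDC \<Omega> K \<mu>p \<mu>m = 0 \<longleftrightarrow>
    (\<forall>u. convex_on \<Omega> u \<and> integrable \<mu>p u \<and> integrable \<mu>m u \<longrightarrow>
         integral\<^sup>L \<mu>m u - integral\<^sup>L \<mu>p u \<le> 0)"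
proof -
  have fin: "finite_measure \<mu>p" "finite_measure \<mu>m"
    using assms(6,8) by (simp_all add: prob_space_def)
  have "\<Omega> \<noteq> {}"
    using prob_space.not_empty[OF assms(6)] space_restrict_borel[OF assms(7)] by simp
  have "(\<lambda>_. 0) \<in> admissible \<Omega> K"
    using zero_admissible[OF assms(3)] assms(5) interior_subset by blast
  then have "0 \<le> VDC \<Omega> K \<mu>p \<mu>m"
    unfolding VDC_def by (rule SUP_upper2) simp
  moreover have "VDC \<Omega> K \<mu>p \<mu>m \<le> 0 \<longleftrightarrow> (\<forall>w\<in>admissible \<Omega> K. integral\<^sup>L \<mu>m w - integral\<^sup>L \<mu>p w \<le> 0)"
    unfolding VDC_def by (simp add: SUP_le_iff)
  moreover note
    admissible_nonpos_iff_convex_nonpos[OF assms(1,2) \<open>\<Omega> \<noteq> {}\<close> assms(4,5) fin(1) assms(7) fin(2) assms(9)]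
  ultimately show ?thesis
    by auto
qed

end
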